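(* Let $0<c<\Gamma_0$ and $t>0$, and let $\mathcal D=\{(\tau,p):0<\tau<t,\ c<p<\Gamma_0\}$. Let $A$ be the cooperation area and regions IV, V, VI as defined in the context, and let $w_0$, $w_1$, $w_2$ be the associated thresholds defined there. If $(\tau^\star,p^\star)\in\mathcal D$ maximizes $A$ over $\mathcal D$, then one of the following holds: - $(\tau^\star,p^\star)$ lies in the closure of region IV; - $(\tau^\star,p^\star)$ lies in region V and $A_c(\tau^\star,p^\star;w_1,1)-A_s(\tau^\star,p^\star;w_0,w_1)=1-2w_1+w_0$; - $(\tau^\star,p^\star)$ lies in region VI and $A_s(\tau^\star,p^\star;w_2,1)-A_c(\tau^\star,p^\star;w_0,w_2)=1-2w_2+w_0$. Here $w_0,w_1,w_2$ are evaluated at $(\tau^\star,p^\star)$.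
   Context: The client utility is linear: $\Gamma(d)=\Gamma_0(1-d)$. For $(\tau,p)\in\mathcal D$ write $s=\tau/t$ and, for $w\in(0,1]$, set $K(w)=1-(1-w)s$. Define the SP and client outage thresholds $$d_s(w;\tau,p)=1-\frac{cK(w)}{wp},\qquad d_c(w;\tau,p)=1-\frac{p}{\Gamma_0K(w)}.$$ The cooperation area is $$A(\tau,p)=\int_0^1\max\{\min(d_s(w;\tau,p),d_c(w;\tau,p)),0\}\,dw.$$ For $0\le x\le y\le 1$, let $$A_s(\tau,p;x,y)=\int_x^y d_s(w;\tau,p)\,dw,\qquad A_c(\tau,p;x,y)=\int_x^y d_c(w;\tau,p)\,dw.$$ Define the thresholds $$w_0=\max\left\{\frac{c(t-\tau)}{pt-c\tau},\ \frac{pt-\Gamma_0(t-\tau)}{\Gamma_0\tau}\right\},$$ $$w_{1}=\left(\frac{p-\sqrt{p^2-4c\Gamma_0 s(1-s)}}{2s\sqrt{c\Gamma_0}}\right)^2,\qquad w_{2}=\left(\frac{p+\sqrt{p^2-4c\Gamma_0 s(1-s)}}{2s\sqrt{c\Gamma_0}}\right)^2.$$ The regions (subsets of $\mathcal D$) are: - region IV: $p^2\ge 4c\Gamma_0 s(1-s)$, $p<\Gamma_0(1-s)+cs$, $p<\sqrt{c\Gamma_0}$, and $\tfrac12<s<\tfrac{\Gamma_0}{\Gamma_0+c}$; - region V: $p^2\ge4c\Gamma_0 s(1-s)$, $p<\Gamma_0(1-s)+cs$, and $p>\sqrt{c\Gamma_0}$; - region VI: $p^2\ge 4c\Gamma_0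 s(1-s)$, $p>\Gamma_0(1-s)+cs$, and $p<\sqrt{c\Gamma_0}$. *)

theory Defs
  imports "HOL-Analysis.Analysis"
begin

text \<open>Parameters: c (SP cost), G0 (Gamma_0), t (horizon). Points of the domain are pairs (tau, p).\<close>

definition K_fun :: "real \<Rightarrow> real \<Rightarrow> real \<Rightarrow> real" where
  "K_fun t \<tau> w = 1 - (1 - w) * (\<tau> / t)"

definition d_s :: "real \<Rightarrow> real \<Rightarrow> real \<Rightarrow> real \<Rightarrow> real \<Rightarrow> real" where
  "d_s c t \<tau> p w = 1 - c * K_fun t \<tau> w / (w * p)"

definition d_c :: "real \<Rightarrow> real \<Rightarrow> real \<Rightarrow> real \<Rightarrow> real \<Rightarrow> real" where
  "d_c G0 t \<tau> p w = 1 - p / (G0 * K_fun t \<tau> w)"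

definition coop_area :: "real \<Rightarrow> real \<Rightarrow> real \<Rightarrow> real \<Rightarrow> real \<Rightarrow> real" where
  "coop_area c G0 t \<tau> p =
     integral {0..1} (\<lambda>w. max (min (d_s c t \<tau> p w) (d_c G0 t \<tau> p w)) 0)"

definition A_s :: "real \<Rightarrow> real \<Rightarrow> real \<Rightarrow> real \<Rightarrow> real \<Rightarrow> real \<Rightarrow> real" where
  "A_s c t \<tau> p x y = integral {x..y} (\<lambda>w. d_s c t \<tau> p w)"

definition A_c :: "real \<Rightarrow> real \<Rightarrow> real \<Rightarrow> real \<Rightarrow> real \<Rightarrow> real \<Rightarrow> real" where
  "A_c G0 t \<tau> p x y = integral {x..y} (\<lambda>w. d_c G0 t \<tau> p w)"

definition w0 :: "real \<Rightarrow> real \<Rightarrow> real \<Rightarrow> real \<Rightarrow> real \<Rightarrow> real" where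
  "w0 c G0 t \<tau> p = max (c * (t - \<tau>) / (p * t - c * \<tau>)) ((p * t - G0 * (t - \<tau>)) / (G0 * \<tau>))"

definition w1 :: "real \<Rightarrow> real \<Rightarrow> real \<Rightarrow> real \<Rightarrow> real \<Rightarrow> real" where
  "w1 c G0 t \<tau> p = (let s = \<tau> / t in
     ((p - sqrt (p\<^sup>2 - 4 * c * G0 * s * (1 - s))) / (2 * s * sqrt (c * G0)))\<^sup>2)"

definition w2 :: "real \<Rightarrow> real \<Rightarrow> real \<Rightarrow> real \<Rightarrow> real \<Rightarrow> real" where
  "w2 c G0 t \<tau> p = (let s = \<tau> / t in
     ((p + sqrt (p\<^sup>2 - 4 * c * G0 * s * (1 - s))) / (2 * s * sqrt (c * G0)))\<^sup>2)"

definition dom_D :: "real \<Rightarrow> real \<Rightarrow> real \<Rightarrow> (real \<times> real) set" where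
  "dom_D c G0 t = {(\<tau>, p). 0 < \<tau> \<and> \<tau> < t \<and> c < p \<and> p < G0}"

definition region_IV :: "real \<Rightarrow> real \<Rightarrow> real \<Rightarrow> (real \<times> real) set" where
  "region_IV c G0 t = {(\<tau>, p) \<in> dom_D c G0 t. let s = \<tau> / t in
     p\<^sup>2 \<ge> 4 * c * G0 * s * (1 - s) \<and> p < G0 * (1 - s) + c * s \<and> p < sqrt (c * G0)
     \<and> 1/2 < s \<and> s < G0 / (G0 + c)}"

definition region_V :: "real \<Rightarrow> real \<Rightarrow> real \<Rightarrow> (real \<times> real) set" where
  "region_V c G0 t = {(\<tau>, p) \<in> dom_D c G0 t. let s = \<tau> / t in
     p\<^sup>2 \<ge> 4 * c * G0 * s * (1 - s) \<and> p < G0 * (1 - s) + c * s \<and> p > sqrt (c * G0)}"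

definition region_VI :: "real \<Rightarrow> real \<Rightarrow> real \<Rightarrow> (real \<times> real) set" where
  "region_VI c G0 t = {(\<tau>, p) \<in> dom_D c G0 t. let s = \<tau> / t in
     p\<^sup>2 \<ge> 4 * c * G0 * s * (1 - s) \<and> p > G0 * (1 - s) + c * s \<and> p < sqrt (c * G0)}"

end

theory Submission
  imports Defs
begin

text \<open>
  In the coordinates \<open>k = G\<^sub>0/c\<close>, \<open>a = c (1 - s)/p\<close>, \<open>b = c s/p\<close>, which map the domain onto
  \<open>{a, b > 0, 1/k < a + b < 1}\<close>, both thresholds depend on \<open>(\<tau>, p)\<close> only through the line
  \<open>X(w) = a + b w = c K(w)/p\<close>: \<open>d\<^sub>s = 1 - X/w\<close> and \<open>d\<^sub>c = 1 - 1/(k X)\<close>. For fixed \<open>w\<close>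
  their minimum is unimodal in \<open>X\<close> with peak at \<open>X = sqrt (w/k)\<close>, so perturbing \<open>(a, b)\<close>
  such that \<open>X(w)\<close> moves towards \<open>sqrt (w/k)\<close> on the whole support of the integrand strictly
  increases the area. Such a perturbation exists unless the line meets the curve \<open>sqrt (w/k)\<close>
  at points \<open>w\<^sub>1 \<le> w\<^sub>2\<close> with \<open>w\<^sub>0 \<le> w\<^sub>1\<close> and \<open>w\<^sub>2 \<le> 1\<close>: if there is no crossing, lower \<open>a\<close>;
  otherwise rotate the line slightly about one crossing so that the other one stays outside
  \<open>[w\<^sub>0, 1]\<close>. The configurations that survive lie in the closure of region IV, so the alternatives
  for regions V and VI never occur at a maximizer.
\<close>

definition coop_profile :: "real \<Rightarrow> real \<Rightarrow> real \<Rightarrow> real \<Rightarrow> real" where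
  "coop_profile k a b w = max (min (1 - (a + b * w)/w) (1 - 1/(k * (a + b * w)))) 0"

definition coop_integral :: "real \<Rightarrow> real \<Rightarrow> real \<Rightarrow> real" where
  "coop_integral k a b = integral {0..1} (coop_profile k a b)"

definition norm_dom :: "real \<Rightarrow> (real \<times> real) set" where
  "norm_dom k = {(a, b). 0 < a \<and> 0 < b \<and> 1/k < a + b \<and> a + b < 1}"

lemma coop_area_eq_coop_integral:
  assumes "0 < c" "0 < t" "0 < p"
  shows "coop_area c G0 t \<tau> p = coop_integral (G0/c) (c * (1 - \<tau>/t)/p) (c * (\<tau>/t)/p)"
proof -
  have "max (min (d_s c t \<tau> p w) (d_c G0 t \<tau> p w)) 0
      = coop_profile (G0/c) (c * (1 - \<tau>/t)/p) (c * (\<tau>/t)/p) w" for w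
  proof -
    have "c * K_fun t \<tau> w / (w * p) = (c * (1 - \<tau>/t)/p + c * (\<tau>/t)/p * w)/w"
      and "G0/c * (c * (1 - \<tau>/t)/p + c * (\<tau>/t)/p * w) = G0 * K_fun t \<tau> w / p"
      unfolding K_fun_def using assms by (simp_all add: field_simps)
    then show ?thesis unfolding coop_profile_def d_s_def d_c_def by simp
  qed
  then show ?thesis unfolding coop_area_def coop_integral_def by simp
qed

lemma norm_coords_in_norm_dom:
  assumes "0 < c" "0 < t" "(\<tau>, p) \<in> dom_D c G0 t"
  shows "(c * (1 - \<tau>/t)/p, c * (\<tau>/t)/p) \<in> norm_dom (G0/c)"
proof -
  have D: "0 < \<tau>" "\<tau> < t" "c < p" "p < G0" using assms(3) unfolding dom_D_def by auto
  have "c * (1 - \<tau>/t)/p + c * (\<tau>/t)/p = c/p" using assms D by (simp add: field_simps)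
  moreover have "c/G0 < c/p" "c/p < 1" using assms D by (simp_all add: frac_less2)
  ultimately show ?thesis unfolding norm_dom_def using assms D by simp
qed

lemma coop_integral_attained:
  assumes "0 < c" "c < G0" "0 < t" "(a, b) \<in> norm_dom (G0/c)"
  shows "\<exists>(\<tau>, p) \<in> dom_D c G0 t. coop_area c G0 t \<tau> p = coop_integral (G0/c) a b"
proof -
  have ab: "0 < a" "0 < b" "c/G0 < a + b" "a + b < 1" using assms(4) unfolding norm_dom_def by auto
  then have ab0: "0 < a + b" by simp
  define \<tau> where "\<tau> = t * (b/(a + b))"
  define p where "p = c/(a + b)"
  have "c * (a + b) < c * 1" using assms ab by (intro mult_strict_left_mono) auto
  moreover have "c < G0 * (a + b)" using assms ab by (simp add: field_simps)
  ultimately have in_D: "(\<tau>, p) \<in> dom_D c G0 t"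
    unfolding dom_D_def \<tau>_def p_def using assms ab ab0 by (simp add: field_simps)
  have st: "\<tau>/t = b/(a + b)" unfolding \<tau>_def using assms by simp
  have "1 - b/(a + b) = a/(a + b)" using ab0 by (simp add: field_simps)
  moreover have "c * (x/(a + b))/(c/(a + b)) = x" for x using assms ab0 by simp
  ultimately have "c * (1 - \<tau>/t)/p = a" "c * (\<tau>/t)/p = b" unfolding st p_def by simp_all
  then show ?thesis
    using in_D coop_area_eq_coop_integral[of c t p G0 \<tau>] assms(1,3) ab0 unfolding p_def by force
qed

lemma min_thresholds_towards_peak:
  fixes w k X Y :: real
  assumes "0 < w" "0 < k" "0 < X" "0 < Y" and between: "(Y - X) * (Y - sqrt (w/k)) \<le> 0"
  shows "min (1 - X/w) (1 - 1/(k * X)) \<le> min (1 - Y/w) (1 - 1/(k * Y))"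
    and "Y \<noteq> X \<Longrightarrow> min (1 - X/w) (1 - 1/(k * X)) < min (1 - Y/w) (1 - 1/(k * Y))"
proof -
  define f where "f Z = min (1 - Z/w) (1 - 1/(k * Z))" for Z
  have sq: "Z/w \<le> 1/(k * Z) \<longleftrightarrow> Z^2 \<le> w/k" "1/(k * Z) \<le> Z/w \<longleftrightarrow> w/k \<le> Z^2" if "0 < Z" for Z
    using assms that by (simp_all add: field_simps power2_eq_square)
  have rising: "f Z = 1 - 1/(k * Z)" if "0 < Z" "Z \<le> sqrt (w/k)" for Z
  proof -
    have "Z^2 \<le> w/k" using that real_sqrt_le_iff[of "Z^2" "w/k"] by simp
    then show ?thesis using sq(1)[OF that(1)] unfolding f_def by (intro min_absorb2) simp
  qed
  have falling: "f Z = 1 - Z/w" if "0 < Z" "sqrt (w/k) \<le> Z" for Z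
  proof -
    have "w/k \<le> Z^2" using that real_sqrt_le_iff[of "w/k" "Z^2"] by simp
    then show ?thesis using sq(2)[OF that(1)] unfolding f_def by (intro min_absorb1) simp
  qed
  consider "X \<le> Y" "Y \<le> sqrt (w/k)" | "sqrt (w/k) \<le> Y" "Y \<le> X"
    using between unfolding mult_le_0_iff by linarith
  then have "f X \<le> f Y \<and> (Y \<noteq> X \<longrightarrow> f X < f Y)"
  proof cases
    case 1
    then have "1/(k * Y) \<le> 1/(k * X)" "Y \<noteq> X \<longrightarrow> 1/(k * Y) < 1/(k * X)"
      using assms by (auto intro: divide_left_mono divide_strict_left_mono)
    then show ?thesis using rising[of X] rising[of Y] 1 assms by simp
  next
    case 2
    then have "Y/w \<le> X/w" "Y \<noteq> X \<longrightarrow> Y/w < X/w"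
      using assms by (auto simp: divide_right_mono divide_strict_right_mono)
    then show ?thesis using falling[of X] falling[of Y] 2 assms by simp
  qed
  then show "min (1 - X/w) (1 - 1/(k * X)) \<le> min (1 - Y/w) (1 - 1/(k * Y))"
    and "Y \<noteq> X \<Longrightarrow> min (1 - X/w) (1 - 1/(k * X)) < min (1 - Y/w) (1 - 1/(k * Y))"
    unfolding f_def by auto
qed

lemma coop_profile_nonneg: "0 \<le> coop_profile k a b w"
  unfolding coop_profile_def by simp

lemma coop_profile_eq_0:
  assumes "0 < w" "w \<le> a" "0 \<le> b"
  shows "coop_profile k a b w = 0"
proof -
  have "1 \<le> a/w" "a/w \<le> (a + b * w)/w" using assms by (simp_all add: divide_right_mono)
  then show ?thesis unfolding coop_profile_def by simp
qed

text \<open>At \<open>w = 0\<close> the profile takes a junk value (because \<open>x/0 = 0\<close>), but it vanishes on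
  \<open>(0, a]\<close>; clipping \<open>w\<close> at \<open>a/2\<close> yields a continuous integrand with the same integral.\<close>

lemma coop_profile_clip:
  assumes "0 < a" "0 \<le> b" "0 < w"
  shows "coop_profile k a b (max w (a/2)) = coop_profile k a b w"
  using coop_profile_eq_0[of "a/2" a b k] coop_profile_eq_0[of w a b k] assms
  by (cases "a/2 \<le> w") (auto simp: max_def)

lemma continuous_on_coop_profile_clipped:
  assumes "0 < k" "0 < a" "0 \<le> b"
  shows "continuous_on {0..1} (\<lambda>w. coop_profile k a b (max w (a/2)))"
proof -
  have "0 < max w (a/2)" "0 < a + b * max w (a/2)" for w
    using assms by (auto intro: add_pos_nonneg)
  then show ?thesis unfolding coop_profile_def
    by (intro continuous_intros) (use assms in \<open>auto simp: less_imp_neq[symmetric]\<close>)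
qed

lemma coop_integral_clipped:
  assumes "0 < a" "0 \<le> b"
  shows "coop_integral k a b = integral {0..1} (\<lambda>w. coop_profile k a b (max w (a/2)))"
  unfolding coop_integral_def
  by (rule integral_spike[of "{0}"]) (auto simp: coop_profile_clip assms)

lemma coop_profile_towards_peak:
  assumes "0 < w" "0 < k" "0 < a + b * w" "0 < a' + b' * w"
    and towards: "0 < coop_profile k a b w \<Longrightarrow>
      ((a' + b' * w) - (a + b * w)) * ((a' + b' * w) - sqrt (w/k)) \<le> 0"
  shows "coop_profile k a b w \<le> coop_profile k a' b' w"
    and "a' + b' * w \<noteq> a + b * w \<Longrightarrow> 0 < coop_profile k a b w \<Longrightarrow>
      coop_profile k a b w < coop_profile k a' b' w"
proof -
  note mins = min_thresholds_towards_peak[of w k "a + b * w" "a' + b' * w", OF assms(1-4) towards]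
  show "coop_profile k a b w \<le> coop_profile k a' b' w"
  proof (cases "0 < coop_profile k a b w")
    case True
    show ?thesis unfolding coop_profile_def using mins(1)[OF True] by (rule max.mono) simp
  next
    case False
    then show ?thesis
      using coop_profile_nonneg[of k a b w] coop_profile_nonneg[of k a' b' w] by simp
  qed
  show "coop_profile k a b w < coop_profile k a' b' w"
    if "a' + b' * w \<noteq> a + b * w" "0 < coop_profile k a b w"
    using mins(2)[OF that(2,1)] that(2) unfolding coop_profile_def by linarith
qed

lemma coop_integral_less:
  assumes "0 < k" "0 < a" "0 \<le> b" "0 < a'" "0 \<le> b'"
    and towards: "\<And>w. w \<in> {0<..1} \<Longrightarrow> 0 < coop_profile k a b w \<Longrightarrow>
      ((a' + b' * w) - (a + b * w)) * ((a' + b' * w) - sqrt (w/k)) \<le> 0"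
    and moved: "\<exists>w\<in>{0<..1}. 0 < coop_profile k a b w \<and> a' + b' * w \<noteq> a + b * w"
  shows "coop_integral k a b < coop_integral k a' b'"
proof -
  define h where
    "h w = coop_profile k a' b' (max w (a'/2)) - coop_profile k a b (max w (a/2))" for w
  have h_pos: "h w = coop_profile k a' b' w - coop_profile k a b w" if "0 < w" for w
    unfolding h_def using coop_profile_clip that assms by simp
  note profile = coop_profile_towards_peak[of w k a b a' b' for w]
  have X_pos: "0 < a + b * w" "0 < a' + b' * w" if "0 < w" for w
    using assms that by (auto intro: add_pos_nonneg)
  have cont: "continuous_on {0..1} h" unfolding h_def
    using continuous_on_coop_profile_clipped assms by (intro continuous_intros) auto
  have nonneg: "0 \<le> h w" if "w \<in> {0..1}" for w
  proof (cases "w = 0")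
    case True
    then show ?thesis
      unfolding h_def using coop_profile_eq_0[of "a/2" a b k] coop_profile_nonneg assms by simp
  next
    case False
    then show ?thesis using that profile(1) towards[of w] X_pos[of w] h_pos[of w] assms by simp
  qed
  obtain w where w: "w \<in> {0<..1}" "0 < coop_profile k a b w" "a' + b' * w \<noteq> a + b * w"
    using moved by blast
  then have "0 < h w" using profile(2) towards[of w] X_pos[of w] h_pos[of w] assms by simp
  then have "integral {0..1} h \<noteq> 0" using integral_eq_0_iff[OF cont _ nonneg] w(1) by force
  moreover have "0 \<le> integral {0..1} h"
    using nonneg by (intro integral_nonneg integrable_continuous_real cont) auto
  moreover have "integral {0..1} h = coop_integral k a' b' - coop_integral k a b"
    unfolding h_def coop_integral_clipped[OF assms(2,3)] coop_integral_clipped[OF assms(4,5)]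
    by (intro Henstock_Kurzweil_Integration.integral_diff integrable_continuous_real
        continuous_on_coop_profile_clipped) (use assms in auto)
  ultimately show ?thesis by linarith
qed

text \<open>In the coordinates \<open>a, b\<close> the threshold \<open>w\<^sub>0\<close> becomes \<open>support_start\<close>, and
  \<open>w\<^sub>1, w\<^sub>2\<close> become the squares of \<open>root_lo, root_hi\<close>: the crossings \<open>w = \<rho>\<^sup>2\<close> of the line
  \<open>a + b w\<close> with the curve \<open>sqrt (w/k)\<close>, where \<open>d\<^sub>s = d\<^sub>c\<close>.\<close>

definition support_start :: "real \<Rightarrow> real \<Rightarrow> real \<Rightarrow> real" where
  "support_start k a b = max (a/(1 - b)) ((1/k - a)/b)"

definition root_lo :: "real \<Rightarrow> real \<Rightarrow> real \<Rightarrow> real" where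
  "root_lo k a b = (1 - sqrt (1 - 4 * k * a * b)) / (2 * sqrt k * b)"

definition root_hi :: "real \<Rightarrow> real \<Rightarrow> real \<Rightarrow> real" where
  "root_hi k a b = (1 + sqrt (1 - 4 * k * a * b)) / (2 * sqrt k * b)"

lemma coop_profile_pos_iff:
  assumes "0 < k" "0 < a" "0 < b" "b < 1" "0 < w"
  shows "0 < coop_profile k a b w \<longleftrightarrow> support_start k a b < w"
proof -
  have X: "0 < a + b * w" using assms by (simp add: add_pos_pos)
  have "(a + b * w)/w < 1 \<longleftrightarrow> a/(1 - b) < w" using assms by (simp add: field_simps)
  moreover have "0 < k * (a + b * w)" using assms X by simp
  then have "1/(k * (a + b * w)) < 1 \<longleftrightarrow> 1 < k * (a + b * w)" by simp
  moreover have "1 < k * (a + b * w) \<longleftrightarrow> (1/k - a)/b < w" using assms by (simp add: field_simps)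
  ultimately show ?thesis unfolding coop_profile_def support_start_def by auto
qed

lemma support_start_bounds:
  assumes "0 < k" "(a, b) \<in> norm_dom k"
  shows "0 < support_start k a b" "support_start k a b < 1"
proof -
  have ab: "0 < a" "0 < b" "1/k < a + b" "a + b < 1" using assms(2) unfolding norm_dom_def by auto
  then have "0 < a/(1 - b)" by simp
  then show "0 < support_start k a b" unfolding support_start_def by (rule max.strict_coboundedI1)
  show "support_start k a b < 1" unfolding support_start_def using ab by (simp add: field_simps)
qed

lemma coop_profile_pos_avoiding:
  assumes "0 < k" "(a, b) \<in> norm_dom k"
  obtains w where "w \<in> {0<..1}" "0 < coop_profile k a b w" "w \<noteq> r"
proof -
  have ab: "0 < a" "0 < b" "b < 1" using assms(2) unfolding norm_dom_def by auto
  have pos: "0 < coop_profile k a b w" if "support_start k a b < w" for w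
    using coop_profile_pos_iff[OF assms(1) ab] support_start_bounds[OF assms] that by simp
  show ?thesis
  proof (cases "r = 1")
    case True
    then show ?thesis
      using that[of "(1 + support_start k a b)/2"] pos support_start_bounds[OF assms] by simp
  next
    case False
    then show ?thesis using that[of 1] pos support_start_bounds[OF assms] by simp
  qed
qed

lemma crossing_roots:
  assumes "0 < k" "0 < a" "0 < b" "4 * k * a * b \<le> 1"
  shows "0 < root_lo k a b" "root_lo k a b \<le> root_hi k a b"
    and "root_lo k a b * root_hi k a b = a/b"
    and "a + b * u^2 - u/sqrt k = b * (u - root_lo k a b) * (u - root_hi k a b)"
proof -
  define r where "r = sqrt (1 - 4 * k * a * b)"
  have r: "0 \<le> r" "r^2 = 1 - 4 * k * a * b" using assms by (auto simp: r_def)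
  have "r < 1" unfolding r_def using assms by simp
  have \<kappa>: "0 < sqrt k" "(sqrt k)^2 = k" using assms by auto
  have lo: "root_lo k a b = (1 - r)/(2 * sqrt k * b)"
    and hi: "root_hi k a b = (1 + r)/(2 * sqrt k * b)"
    unfolding root_lo_def root_hi_def r_def by simp_all
  show "0 < root_lo k a b" "root_lo k a b \<le> root_hi k a b"
    unfolding lo hi using \<open>r < 1\<close> r \<kappa> assms by (simp_all add: divide_right_mono)
  have sum: "root_lo k a b + root_hi k a b = 1/(sqrt k * b)"
    unfolding lo hi using \<kappa> assms by (simp add: field_simps)
  have "root_lo k a b * root_hi k a b = (1 - r^2)/(4 * (sqrt k)^2 * b^2)"
    unfolding lo hi by (simp add: field_simps power2_eq_square)
  also have "\<dots> = a/b" unfolding r \<kappa> using assms by (simp add: field_simps power2_eq_square)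
  finally show prod: "root_lo k a b * root_hi k a b = a/b" .
  have "b * (u - root_lo k a b) * (u - root_hi k a b)
      = b * u^2 - b * (root_lo k a b + root_hi k a b) * u + b * (root_lo k a b * root_hi k a b)"
    by (simp add: algebra_simps power2_eq_square)
  then show "a + b * u^2 - u/sqrt k = b * (u - root_lo k a b) * (u - root_hi k a b)"
    unfolding sum prod using \<kappa> assms by (simp add: field_simps)
qed

text \<open>The line \<open>a - d \<rho>\<^sup>2 + (b + d) u\<^sup>2\<close> is \<open>a + b u\<^sup>2\<close> rotated about its crossing \<open>u = \<rho>\<close>
  with \<open>u/\<kappa>\<close>; the last factor vanishes at its other crossing, as the product of the two
  crossings is \<open>(a - d \<rho>\<^sup>2)/(b + d)\<close>.\<close>

lemma rotated_line_factorization: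
  fixes a b d \<rho> \<kappa> u :: real
  assumes "0 < \<kappa>" "0 < \<rho>" "a + b * \<rho>^2 = \<rho>/\<kappa>" "b + d \<noteq> 0"
  shows "((a - d * \<rho>^2 + (b + d) * u^2) - (a + b * u^2)) * ((a - d * \<rho>^2 + (b + d) * u^2) - u/\<kappa>)
     = d * (b + d) * (u - \<rho>)^2 * (u + \<rho>) * (u - (a - d * \<rho>^2)/((b + d) * \<rho>))"
proof -
  define \<rho>' where "\<rho>' = (a - d * \<rho>^2)/((b + d) * \<rho>)"
  have prod: "(b + d) * \<rho> * \<rho>' = a - d * \<rho>^2" unfolding \<rho>'_def using assms by simp
  have sum: "(b + d) * (\<rho> + \<rho>') = 1/\<kappa>"
  proof -
    have "(b + d) * (\<rho> + \<rho>') = ((b + d) * \<rho>^2 + (b + d) * \<rho> * \<rho>')/\<rho>"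
      using assms by (simp add: field_simps power2_eq_square)
    also have "\<dots> = (a + b * \<rho>^2)/\<rho>" unfolding prod by (simp add: algebra_simps)
    finally show ?thesis using assms by simp
  qed
  have "u/\<kappa> = u * ((b + d) * (\<rho> + \<rho>'))" unfolding sum by simp
  then have "(a - d * \<rho>^2 + (b + d) * u^2) - u/\<kappa>
      = (b + d) * \<rho> * \<rho>' + (b + d) * u^2 - u * ((b + d) * (\<rho> + \<rho>'))"
    unfolding prod by simp
  also have "\<dots> = (b + d) * (u - \<rho>) * (u - \<rho>')" by (simp add: algebra_simps power2_eq_square)
  finally have "(a - d * \<rho>^2 + (b + d) * u^2) - u/\<kappa> = (b + d) * (u - \<rho>) * (u - \<rho>')" .
  moreover have "(a - d * \<rho>^2 + (b + d) * u^2) - (a + b * u^2) = d * (u - \<rho>) * (u + \<rho>)"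
    by (simp add: algebra_simps power2_eq_square)
  ultimately show ?thesis unfolding \<rho>'_def[symmetric] by (simp add: power2_eq_square mult_ac)
qed

lemma coop_integral_less_by_rotation:
  fixes k a b d \<rho> :: real
  assumes "0 < k" "(a, b) \<in> norm_dom k" "0 < \<rho>" "a + b * \<rho>^2 = \<rho>/sqrt k"
    and "d \<noteq> 0" "0 < b + d" "0 < a - d * \<rho>^2"
    and side: "\<And>w. w \<in> {0<..1} \<Longrightarrow> 0 < coop_profile k a b w \<Longrightarrow>
      d * (sqrt w - (a - d * \<rho>^2)/((b + d) * \<rho>)) \<le> 0"
  shows "coop_integral k a b < coop_integral k (a - d * \<rho>^2) (b + d)"
proof (rule coop_integral_less)
  show "0 < k" "0 < a" "0 \<le> b" "0 < a - d * \<rho>^2" "0 \<le> b + d"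
    using assms unfolding norm_dom_def by auto
  fix w assume w: "w \<in> {0<..1}" and pos: "0 < coop_profile k a b w"
  define u where "u = sqrt w"
  have u: "0 < u" "u^2 = w" "sqrt (w/k) = u/sqrt k"
    using w unfolding u_def by (auto simp: real_sqrt_divide)
  have "(a - d * \<rho>^2 + (b + d) * w - (a + b * w)) * (a - d * \<rho>^2 + (b + d) * w - sqrt (w/k))
      = ((b + d) * (u - \<rho>)^2 * (u + \<rho>)) * (d * (u - (a - d * \<rho>^2)/((b + d) * \<rho>)))"
    unfolding u(3) unfolding u(2)[symmetric]
    using rotated_line_factorization[of "sqrt k" \<rho> a b d u] assms by (simp add: mult_ac)
  also have "\<dots> \<le> 0"
    using side[OF w pos] assms u unfolding u_def by (rule_tac mult_nonneg_nonpos) auto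
  finally show "(a - d * \<rho>^2 + (b + d) * w - (a + b * w))
      * (a - d * \<rho>^2 + (b + d) * w - sqrt (w/k)) \<le> 0" .
next
  obtain w where w: "w \<in> {0<..1}" "0 < coop_profile k a b w" "w \<noteq> \<rho>^2"
    using coop_profile_pos_avoiding[OF assms(1,2)] by blast
  have "(a - d * \<rho>^2 + (b + d) * w) - (a + b * w) = d * (w - \<rho>^2)" by (simp add: algebra_simps)
  moreover have "d * (w - \<rho>^2) \<noteq> 0" using w(3) assms(5) by simp
  ultimately have "a - d * \<rho>^2 + (b + d) * w \<noteq> a + b * w" by (metis diff_self)
  then show "\<exists>w\<in>{0<..1}. 0 < coop_profile k a b w \<and> a - d * \<rho>^2 + (b + d) * w \<noteq> a + b * w"
    using w by blast
qed

lemma eventually_at_right_0_mult_less: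
  "0 < \<beta> \<Longrightarrow> eventually (\<lambda>e. e * \<alpha> < \<beta>) (at_right (0::real))"
  using order_tendstoD(2)[OF tendsto_mult_left_zero[OF tendsto_ident_at, of \<alpha>]]
  by (simp add: mult.commute)

lemma eventually_at_right_0_witness:
  assumes "eventually P (at_right (0::real))"
  obtains e where "0 < e" "P e"
proof -
  have "eventually (\<lambda>e. P e \<and> 0 < e) (at_right (0::real))"
    using assms eventually_at_right_less[of "0::real"] by (rule eventually_conj)
  then show ?thesis using that eventually_happens'[of "at_right (0::real)"] by auto
qed

lemma coop_integral_improvable_no_crossing:
  assumes "0 < k" "(a, b) \<in> norm_dom k" "1 < 4 * k * a * b"
  obtains a' b' where "(a', b') \<in> norm_dom k" "coop_integral k a b < coop_integral k a' b'"
proof -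
  have ab: "0 < a" "0 < b" "1/k < a + b" "a + b < 1" using assms(2) unfolding norm_dom_def by auto
  have "1/(4 * k * b) < a" using assms ab by (simp add: field_simps)
  then have "eventually (\<lambda>e. e * 1 < a - 1/(4 * k * b) \<and> e * 1 < a + b - 1/k) (at_right 0)"
    using ab by (intro eventually_conj eventually_at_right_0_mult_less) auto
  then obtain e where e: "0 < e" "e < a - 1/(4 * k * b)" "e < a + b - 1/k"
    by (rule eventually_at_right_0_witness) auto
  have "0 < 1/(4 * k * b)" using assms ab by simp
  then have "e < a" using e by linarith
  then have "(a - e, b) \<in> norm_dom k" unfolding norm_dom_def using e ab by simp
  moreover have "coop_integral k a b < coop_integral k (a - e) b"
  proof (rule coop_integral_less)
    show "0 < k" "0 < a" "0 \<le> b" "0 < a - e" using assms ab \<open>e < a\<close> by auto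
    fix w :: real assume w: "w \<in> {0<..1}"
    define u where "u = sqrt w"
    have u: "u^2 = w" "sqrt (w/k) = u/sqrt k"
      using w unfolding u_def by (auto simp: real_sqrt_divide)
    have "b * (u - 1/(2 * sqrt k * b))^2 = b * u^2 - u/sqrt k + 1/(4 * k * b)"
      using assms ab by (simp add: power2_eq_square field_simps)
    moreover have "0 \<le> b * (u - 1/(2 * sqrt k * b))^2" using ab by simp
    ultimately have "0 < a - e + b * w - sqrt (w/k)" using u e by simp
    then show "(a - e + b * w - (a + b * w)) * (a - e + b * w - sqrt (w/k)) \<le> 0"
      using e by (simp add: mult_le_0_iff)
  next
    obtain w where "w \<in> {0<..1}" "0 < coop_profile k a b w"
      using coop_profile_pos_avoiding[OF assms(1,2)] by blast
    then show "\<exists>w\<in>{0<..1}. 0 < coop_profile k a b w \<and> a - e + b * w \<noteq> a + b * w" using e by auto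
  qed (use ab in simp)
  ultimately show ?thesis using that by blast
qed

lemma coop_integral_improvable_root_hi_gt_1:
  assumes "0 < k" "(a, b) \<in> norm_dom k" "4 * k * a * b \<le> 1" "1 < root_hi k a b"
  obtains a' b' where "(a', b') \<in> norm_dom k" "coop_integral k a b < coop_integral k a' b'"
proof -
  have ab: "0 < a" "0 < b" "1/k < a + b" "a + b < 1" using assms(2) unfolding norm_dom_def by auto
  note R = crossing_roots[OF assms(1) ab(1,2) assms(3)]
  define \<rho> where "\<rho> = root_lo k a b"
  have \<rho>: "0 < \<rho>" "a + b * \<rho>^2 = \<rho>/sqrt k" using R(1) R(4)[of \<rho>] unfolding \<rho>_def by simp_all
  have "a - b * \<rho> = b * \<rho> * (root_hi k a b - 1)"
    using R(3) ab unfolding \<rho>_def by (simp add: field_simps)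
  then have "0 < a - b * \<rho>" using \<rho> ab assms(4) by simp
  then have "eventually (\<lambda>e. e * (\<rho>^2 + \<rho>) < a - b * \<rho> \<and> e * (1 + \<rho>^2) < 1 - (a + b)
      \<and> e * (1 + \<rho>^2) < a + b - 1/k) (at_right 0)"
    using ab by (intro eventually_conj eventually_at_right_0_mult_less) auto
  then obtain e where e: "0 < e" "e * (\<rho>^2 + \<rho>) < a - b * \<rho>" "e * (1 + \<rho>^2) < 1 - (a + b)"
      "e * (1 + \<rho>^2) < a + b - 1/k"
    by (rule eventually_at_right_0_witness) auto
  have "0 \<le> e * \<rho>^2" "0 < (b + e) * \<rho>" using e \<rho> ab by simp_all
  moreover have "(b + e) * \<rho> < a - e * \<rho>^2" using e(2) by (simp add: algebra_simps)
  ultimately have far: "1 < (a - e * \<rho>^2)/((b + e) * \<rho>)" and pos: "0 < a - e * \<rho>^2"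
    by (simp_all add: less_divide_eq)
  have "e * (1 + \<rho>^2) = e + e * \<rho>^2" by (simp add: algebra_simps)
  then have "1/k < (a - e * \<rho>^2) + (b + e)" "(a - e * \<rho>^2) + (b + e) < 1"
    using e(1,3,4) \<open>0 \<le> e * \<rho>^2\<close> by linarith+
  then have "(a - e * \<rho>^2, b + e) \<in> norm_dom k" unfolding norm_dom_def using e ab pos by simp
  moreover have "coop_integral k a b < coop_integral k (a - e * \<rho>^2) (b + e)"
  proof (rule coop_integral_less_by_rotation[OF assms(1,2) \<rho>])
    show "e \<noteq> 0" "0 < b + e" "0 < a - e * \<rho>^2" using e ab pos by simp_all
    fix w :: real assume "w \<in> {0<..1}"
    then have "sqrt w \<le> 1" by simp
    then have "sqrt w - (a - e * \<rho>^2)/((b + e) * \<rho>) \<le> 0" using far by linarith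
    then show "e * (sqrt w - (a - e * \<rho>^2)/((b + e) * \<rho>)) \<le> 0"
      using e(1) by (simp add: mult_nonneg_nonpos)
  qed
  ultimately show ?thesis using that by blast
qed

lemma coop_integral_improvable_root_lo_lt_support:
  assumes "0 < k" "(a, b) \<in> norm_dom k" "4 * k * a * b \<le> 1"
    and "(root_lo k a b)^2 < support_start k a b"
  obtains a' b' where "(a', b') \<in> norm_dom k" "coop_integral k a b < coop_integral k a' b'"
proof -
  have ab: "0 < a" "0 < b" "1/k < a + b" "a + b < 1" using assms(2) unfolding norm_dom_def by auto
  note R = crossing_roots[OF assms(1) ab(1,2) assms(3)]
  define \<rho> where "\<rho> = root_hi k a b"
  define \<sigma> where "\<sigma> = sqrt (support_start k a b)"
  have \<rho>: "0 < \<rho>" "a + b * \<rho>^2 = \<rho>/sqrt k" using R(1,2) R(4)[of \<rho>] unfolding \<rho>_def by simp_all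
  have "root_lo k a b < \<sigma>" unfolding \<sigma>_def using assms(4) by (rule real_less_rsqrt)
  moreover have "\<sigma> * \<rho> * b - a = \<rho> * b * (\<sigma> - root_lo k a b)"
    using R(3) ab unfolding \<rho>_def by (simp add: field_simps)
  ultimately have "0 < \<sigma> * \<rho> * b - a" using \<rho> ab by simp
  then have "eventually (\<lambda>e. e * 1 < b \<and> e * (\<rho>^2 + \<sigma> * \<rho>) < \<sigma> * \<rho> * b - a
      \<and> e * (1 + \<rho>^2) < 1 - (a + b) \<and> e * (1 + \<rho>^2) < a + b - 1/k) (at_right 0)"
    using ab by (intro eventually_conj eventually_at_right_0_mult_less) auto
  then obtain e where e: "0 < e" "e < b" "e * (\<rho>^2 + \<sigma> * \<rho>) < \<sigma> * \<rho> * b - a"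
      "e * (1 + \<rho>^2) < 1 - (a + b)" "e * (1 + \<rho>^2) < a + b - 1/k"
    by (rule eventually_at_right_0_witness) auto
  have "0 \<le> e * \<rho>^2" "0 < (b - e) * \<rho>" using e \<rho> by simp_all
  moreover have "a + e * \<rho>^2 \<le> \<sigma> * ((b - e) * \<rho>)" using e(3) by (simp add: algebra_simps)
  ultimately have near: "(a + e * \<rho>^2)/((b - e) * \<rho>) \<le> \<sigma>" by (simp add: divide_le_eq)
  have "e * (1 + \<rho>^2) = e + e * \<rho>^2" by (simp add: algebra_simps)
  then have "1/k < (a + e * \<rho>^2) + (b - e)" "(a + e * \<rho>^2) + (b - e) < 1"
    using e(1,4,5) \<open>0 \<le> e * \<rho>^2\<close> by linarith+
  moreover have pos: "0 < a + e * \<rho>^2" using ab(1) \<open>0 \<le> e * \<rho>^2\<close> by linarith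
  ultimately have "(a - (-e) * \<rho>^2, b + (-e)) \<in> norm_dom k"
    unfolding norm_dom_def using e(2) by simp
  moreover have "coop_integral k a b < coop_integral k (a - (-e) * \<rho>^2) (b + (-e))"
  proof (rule coop_integral_less_by_rotation[OF assms(1,2) \<rho>])
    show "-e \<noteq> 0" "0 < b + -e" "0 < a - (-e) * \<rho>^2" using e pos by simp_all
    fix w :: real assume w: "w \<in> {0<..1}" and "0 < coop_profile k a b w"
    then have "support_start k a b < w" using coop_profile_pos_iff[OF assms(1) ab(1,2)] ab by simp
    then have "\<sigma> < sqrt w" unfolding \<sigma>_def by (rule real_sqrt_less_mono)
    then show "(-e) * (sqrt w - (a - (-e) * \<rho>^2)/((b + (-e)) * \<rho>)) \<le> 0" using near e by simp
  qed
  ultimately show ?thesis using that by blast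
qed

lemma maximizer_crossings_inside:
  assumes "0 < k" "(a, b) \<in> norm_dom k"
    and max: "\<And>a' b'. (a', b') \<in> norm_dom k \<Longrightarrow> coop_integral k a' b' \<le> coop_integral k a b"
  shows "4 * k * a * b \<le> 1" "root_hi k a b \<le> 1" "support_start k a b \<le> (root_lo k a b)^2"
proof -
  have no_improvement: False
    if "(a', b') \<in> norm_dom k" "coop_integral k a b < coop_integral k a' b'" for a' b'
    using max[OF that(1)] that(2) by simp
  show crossing: "4 * k * a * b \<le> 1"
    using coop_integral_improvable_no_crossing[OF assms(1,2)] no_improvement by (metis not_le)
  show "root_hi k a b \<le> 1"
    using coop_integral_improvable_root_hi_gt_1[OF assms(1,2) crossing] no_improvement
    by (metis not_le)
  show "support_start k a b \<le> (root_lo k a b)^2"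
    using coop_integral_improvable_root_lo_lt_support[OF assms(1,2) crossing] no_improvement
    by (metis not_le)
qed

lemma crossings_inside_client_bound:
  assumes "0 < k" "(a, b) \<in> norm_dom k" "4 * k * a * b \<le> 1"
    and lo: "support_start k a b \<le> (root_lo k a b)^2"
  shows "1 - b \<le> k * a"
proof (rule ccontr)
  txt \<open>Otherwise the support starts at the outage point \<open>w\<^sub>c\<close> of the client, where the line
    \<open>a + b w\<close> lies strictly below the curve \<open>sqrt (w/k)\<close>, i.e. strictly between the crossings.\<close>
  have ab: "0 < a" "0 < b" "1/k < a + b" "a + b < 1" using assms(2) unfolding norm_dom_def by auto
  note R = crossing_roots[OF assms(1) ab(1,2) assms(3)]
  assume "\<not> 1 - b \<le> k * a"
  define wc where "wc = (1/k - a)/b"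
  have "a/(1 - b) < wc" unfolding wc_def using \<open>\<not> 1 - b \<le> k * a\<close> assms(1) ab
    by (simp add: field_simps)
  then have start: "support_start k a b = wc" unfolding support_start_def wc_def by simp
  have X: "a + b * wc = 1/k" unfolding wc_def using ab by simp
  have "1/k < wc" using \<open>a/(1 - b) < wc\<close> X ab by (simp add: field_simps)
  then have below: "1/k < sqrt (wc/k)"
    using assms(1) by (intro real_less_rsqrt) (simp add: field_simps power2_eq_square)
  have "0 < 1/k" using assms(1) by simp
  then have "0 < wc" using \<open>1/k < wc\<close> by linarith
  then have "(sqrt wc)^2 = wc" by simp
  have "sqrt wc \<le> root_lo k a b" using lo R(1) start by (simp add: real_le_lsqrt)
  then have "0 \<le> (sqrt wc - root_lo k a b) * (sqrt wc - root_hi k a b)"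
    using R(2) by (intro mult_nonpos_nonpos) auto
  then have "0 \<le> b * (sqrt wc - root_lo k a b) * (sqrt wc - root_hi k a b)"
    using ab by (simp add: mult.assoc)
  then have "sqrt wc/sqrt k \<le> a + b * wc" using R(4)[of "sqrt wc"] \<open>(sqrt wc)^2 = wc\<close> by simp
  then have "sqrt wc/sqrt k \<le> 1/k" using X by simp
  then show False using below by (simp add: real_sqrt_divide)
qed

lemma crossings_inside_bounds:
  assumes "0 < k" "(a, b) \<in> norm_dom k" "4 * k * a * b \<le> 1"
    and hi: "root_hi k a b \<le> 1" and lo: "support_start k a b \<le> (root_lo k a b)^2"
  shows "a \<le> b" "1 \<le> sqrt k * (a + b)" "1 - b \<le> k * a" "b \<le> k * a"
proof -
  have ab: "0 < a" "0 < b" "1/k < a + b" "a + b < 1" using assms(2) unfolding norm_dom_def by auto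
  note R = crossing_roots[OF assms(1) ab(1,2) assms(3)]
  have \<kappa>: "0 < sqrt k" "(sqrt k)^2 = k" using assms by auto
  have "root_lo k a b * root_hi k a b \<le> 1 * 1" using R(1,2) hi by (intro mult_mono) auto
  then show "a \<le> b" using R(3) ab by simp
  have "0 \<le> b * (1 - root_lo k a b) * (1 - root_hi k a b)" using R(2) hi ab by simp
  then have "1/sqrt k \<le> a + b" using R(4)[of 1] by simp
  then show "1 \<le> sqrt k * (a + b)" using \<kappa> by (simp add: divide_le_eq mult.commute)
  show lower: "1 - b \<le> k * a" by (rule crossings_inside_client_bound[OF assms(1-3) lo])
  have "a/(1 - b) \<le> (root_lo k a b)^2" using lo unfolding support_start_def by simp
  also have "\<dots> \<le> root_lo k a b * root_hi k a b" using R(1,2) by (simp add: power2_eq_square)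
  also have "\<dots> = a/b" by (rule R(3))
  finally have "b \<le> 1 - b" using ab by (simp add: field_simps)
  then show "b \<le> k * a" using lower by simp
qed

lemma region_IV_lower_boundary:
  fixes c G0 s :: real
  assumes "0 < c" "c < G0" "1/2 < s" "s < G0/(G0 + c)"
  shows "c < sqrt (4 * c * G0 * s * (1 - s))" "sqrt (4 * c * G0 * s * (1 - s)) < sqrt (c * G0)"
    and "sqrt (4 * c * G0 * s * (1 - s)) < G0 * (1 - s) + c * s"
proof -
  have "G0/(G0 + c) < 1" using assms by simp
  then have "s < 1" using assms by linarith
  have "c * s < G0 * (1 - s)" using assms by (simp add: field_simps)
  then have "4 * s * (c * s) < 4 * s * (G0 * (1 - s))"
    using assms by (intro mult_strict_left_mono) auto
  moreover have "1 * 1 < (2 * s) * (2 * s)" using assms by (intro mult_strict_mono) auto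
  then have "c * 1 < c * (4 * s * s)" using assms by (intro mult_strict_left_mono) simp_all
  moreover have "c * (4 * s * s) = 4 * s * (c * s)" by (simp add: mult_ac)
  ultimately have "c < 4 * s * (G0 * (1 - s))" by linarith
  then have "c * c < c * (4 * G0 * s * (1 - s))" using assms by (simp add: mult_ac)
  then show "c < sqrt (4 * c * G0 * s * (1 - s))"
    by (intro real_less_rsqrt) (simp add: power2_eq_square mult_ac)
  have "0 < (s - 1/2)^2" using assms by simp
  then have "c * G0 * (4 * (s * (1 - s))) < c * G0 * 1"
    using assms by (intro mult_strict_left_mono) (simp_all add: power2_eq_square algebra_simps)
  then show "sqrt (4 * c * G0 * s * (1 - s)) < sqrt (c * G0)" by (simp add: mult_ac)
  have "G0 * (1 - s) \<noteq> c * s" using assms by (auto simp: field_simps)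
  then have "0 < (G0 * (1 - s) - c * s)^2" by simp
  also have "(G0 * (1 - s) - c * s)^2 = (G0 * (1 - s) + c * s)^2 - 4 * c * G0 * s * (1 - s)"
    by (simp add: power2_eq_square algebra_simps)
  finally show "sqrt (4 * c * G0 * s * (1 - s)) < G0 * (1 - s) + c * s"
    using assms \<open>s < 1\<close> by (intro real_less_lsqrt) (auto intro: add_pos_pos)
qed

lemma region_IV_memI:
  assumes "0 < c" "c < G0" "0 < t" "1/2 < s" "s < G0/(G0 + c)"
    and "sqrt (4 * c * G0 * s * (1 - s)) \<le> q" "q < sqrt (c * G0)" "q < G0 * (1 - s) + c * s"
  shows "(t * s, q) \<in> region_IV c G0 t"
proof -
  note boundary = region_IV_lower_boundary[OF assms(1,2,4,5)]
  have "G0/(G0 + c) < 1" using assms by simp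
  then have "s < 1" using assms by linarith
  then have "0 < t * s" "t * s < t" using assms by simp_all
  moreover have "c < q" using boundary(1) assms(6) by linarith
  moreover have "sqrt (c * G0) < sqrt (G0 * G0)" using assms by (intro real_sqrt_less_mono) simp
  then have "q < G0" using assms by simp
  moreover have "4 * c * G0 * s * (1 - s) \<le> q^2"
  proof -
    have "0 \<le> 4 * c * G0 * s * (1 - s)" using assms \<open>s < 1\<close> by (intro mult_nonneg_nonneg) auto
    moreover from this have "(sqrt (4 * c * G0 * s * (1 - s)))^2 \<le> q^2"
      using assms(6) by (intro power_mono) auto
    ultimately show ?thesis by (simp only: real_sqrt_pow2)
  qed
  ultimately show ?thesis unfolding region_IV_def dom_D_def Let_def using assms by simp
qed

lemma convex_comb_strict_bounds:
  fixes l u x y \<theta> :: real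
  assumes "0 < \<theta>" "\<theta> \<le> 1" "l \<le> x" "x \<le> u" "l < y" "y < u"
  shows "l < (1 - \<theta>) * x + \<theta> * y" "(1 - \<theta>) * x + \<theta> * y < u"
proof -
  have "(1 - \<theta>) * l \<le> (1 - \<theta>) * x" "(1 - \<theta>) * x \<le> (1 - \<theta>) * u"
    using assms by (simp_all add: mult_left_mono)
  moreover have "\<theta> * l < \<theta> * y" "\<theta> * y < \<theta> * u" using assms by simp_all
  moreover have "(1 - \<theta>) * z + \<theta> * z = z" for z by (simp add: algebra_simps)
  ultimately show "l < (1 - \<theta>) * x + \<theta> * y" "(1 - \<theta>) * x + \<theta> * y < u"
    by (metis add_le_less_mono)+
qed

lemma in_closure_region_IV:
  assumes "0 < c" "c < G0" "0 < t" "1/2 \<le> s" "s \<le> G0/(G0 + c)"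
    and "sqrt (4 * c * G0 * s * (1 - s)) \<le> p" "p \<le> sqrt (c * G0)" "p \<le> G0 * (1 - s) + c * s"
  shows "(t * s, p) \<in> closure (region_IV c G0 t)"
proof -
  define g where "g x = sqrt (4 * c * G0 * x * (1 - x))" for x
  define m where "m x = min (sqrt (c * G0)) (G0 * (1 - x) + c * x)" for x
  define \<theta> where "\<theta> n = inverse (real (Suc n))" for n
  define s0 where "s0 = G0/(G0 + c)"
  define sm where "sm = (1/2 + s0)/2"
  define s_seq where "s_seq n = (1 - \<theta> n) * s + \<theta> n * sm" for n
  define p_seq where "p_seq n = max (g (s_seq n)) (min p (m (s_seq n)) - \<theta> n)" for n
  have \<theta>: "0 < \<theta> n" "\<theta> n \<le> 1" for n unfolding \<theta>_def by (auto simp: inverse_le_1_iff)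
  have "1/2 < s0" unfolding s0_def using assms by (simp add: field_simps)
  then have sm: "1/2 < sm" "sm < s0" unfolding sm_def by auto
  have s_seq: "1/2 < s_seq n" "s_seq n < s0" for n
    unfolding s_seq_def using convex_comb_strict_bounds[OF \<theta>[of n] assms(4,5)[folded s0_def] sm]
    by simp_all
  have mem: "(t * s_seq n, p_seq n) \<in> region_IV c G0 t" for n
  proof (rule region_IV_memI[OF assms(1-3) s_seq[unfolded s0_def]])
    have "g (s_seq n) < m (s_seq n)"
      using region_IV_lower_boundary[OF assms(1,2) s_seq[unfolded s0_def]]
      unfolding g_def m_def by simp
    then have "p_seq n < m (s_seq n)" unfolding p_seq_def using \<theta>[of n] by simp
    then show "p_seq n < sqrt (c * G0)" "p_seq n < G0 * (1 - s_seq n) + c * s_seq n"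
      unfolding m_def by simp_all
  qed (simp add: p_seq_def g_def)
  moreover have "\<theta> \<longlonglongrightarrow> 0" unfolding \<theta>_def by (rule LIMSEQ_inverse_real_of_nat)
  then have "s_seq \<longlonglongrightarrow> (1 - 0) * s + 0 * sm" unfolding s_seq_def by (intro tendsto_intros)
  then have s_lim: "s_seq \<longlonglongrightarrow> s" by simp
  have "p_seq \<longlonglongrightarrow> max (g s) (min p (m s) - 0)" unfolding p_seq_def g_def m_def
    by (intro tendsto_intros s_lim \<open>\<theta> \<longlonglongrightarrow> 0\<close>)
  moreover have "max (g s) (min p (m s) - 0) = p" unfolding g_def m_def using assms by simp
  ultimately have "p_seq \<longlonglongrightarrow> p" by simp
  then have "(\<lambda>n. (t * s_seq n, p_seq n)) \<longlonglongrightarrow> (t * s, p)"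
    by (intro tendsto_Pair tendsto_mult_left s_lim)
  then show ?thesis
    unfolding closure_sequential using mem by (intro exI[of _ "\<lambda>n. (t * s_seq n, p_seq n)"]) simp
qed

lemma in_closure_region_IV_of_norm_bounds:
  fixes c G0 t \<tau> p :: real
  defines "k \<equiv> G0/c" and "a \<equiv> c * (1 - \<tau>/t)/p" and "b \<equiv> c * (\<tau>/t)/p"
  assumes c: "0 < c" "c < G0" "0 < t" and D: "(\<tau>, p) \<in> dom_D c G0 t"
    and bounds: "a \<le> b" "1 \<le> sqrt k * (a + b)" "4 * k * a * b \<le> 1" "1 - b \<le> k * a" "b \<le> k * a"
  shows "(\<tau>, p) \<in> closure (region_IV c G0 t)"
proof -
  define s where "s = \<tau>/t"
  have p: "0 < p" using c(1) D unfolding dom_D_def by auto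
  have a: "a = c * (1 - s)/p" and b: "b = c * s/p" unfolding a_def b_def s_def by simp_all
  have ka: "k * a = G0 * (1 - s)/p" unfolding a k_def using c by simp
  have "c * (1 - s) \<le> c * s" using bounds(1) p unfolding a b by (simp add: divide_le_cancel)
  then have half: "1/2 \<le> s" using c by simp
  have "c * s \<le> G0 * (1 - s)" using bounds(5) p unfolding b ka by (simp add: divide_le_cancel)
  then have s0: "s \<le> G0/(G0 + c)" using c by (simp add: field_simps)
  have "4 * k * a * b = 4 * (k * a) * b" by simp
  then have "4 * k * a * b = 4 * c * G0 * s * (1 - s)/p^2"
    unfolding ka b by (simp add: field_simps power2_eq_square)
  then have "4 * c * G0 * s * (1 - s) \<le> p^2" using bounds(3) p by simp
  then have lower: "sqrt (4 * c * G0 * s * (1 - s)) \<le> p" using p by (simp add: real_le_lsqrt)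
  have "a + b = c/p" unfolding a b add_divide_distrib[symmetric] by (simp add: algebra_simps)
  then have "1 \<le> sqrt k * c / p" using bounds(2) by simp
  moreover have "c * G0 = c^2 * k" unfolding k_def using c by (simp add: power2_eq_square)
  then have "sqrt (c * G0) = sqrt k * c" using c by (simp add: real_sqrt_mult)
  ultimately have peak: "p \<le> sqrt (c * G0)" using p by (simp add: le_divide_eq)
  have "(p - c * s)/p \<le> G0 * (1 - s)/p"
    using bounds(4) p unfolding b ka by (simp add: diff_divide_distrib)
  then have "p \<le> G0 * (1 - s) + c * s" using p by (simp add: divide_le_cancel)
  then have "(t * s, p) \<in> closure (region_IV c G0 t)"
    by (rule in_closure_region_IV[OF c half s0 lower peak])
  then show ?thesis unfolding s_def using c by simp
qed

theorem theorem3: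
  fixes c G0 t \<tau>s ps :: real
  assumes "0 < c" and "c < G0" and "0 < t"
    and "(\<tau>s, ps) \<in> dom_D c G0 t"
    and "\<forall>(\<tau>, p) \<in> dom_D c G0 t. coop_area c G0 t \<tau> p \<le> coop_area c G0 t \<tau>s ps"
  shows "(\<tau>s, ps) \<in> closure (region_IV c G0 t)
    \<or> ((\<tau>s, ps) \<in> region_V c G0 t \<and>
        A_c G0 t \<tau>s ps (w1 c G0 t \<tau>s ps) 1 - A_s c t \<tau>s ps (w0 c G0 t \<tau>s ps) (w1 c G0 t \<tau>s ps)
          = 1 - 2 * w1 c G0 t \<tau>s ps + w0 c G0 t \<tau>s ps)
    \<or> ((\<tau>s, ps) \<in> region_VI c G0 t \<and>
        A_s c t \<tau>s ps (w2 c G0 t \<tau>s ps) 1 - A_c G0 t \<tau>s ps (w0 c G0 t \<tau>s ps) (w2 c G0 t \<tau>s ps)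
          = 1 - 2 * w2 c G0 t \<tau>s ps + w0 c G0 t \<tau>s ps)"
proof -
  define k a b where "k = G0/c" and "a = c * (1 - \<tau>s/t)/ps" and "b = c * (\<tau>s/t)/ps"
  have ps: "0 < ps" using assms(1,4) unfolding dom_D_def by auto
  have k: "0 < k" unfolding k_def using assms(1,2) by simp
  have ab: "(a, b) \<in> norm_dom k"
    unfolding k_def a_def b_def by (rule norm_coords_in_norm_dom[OF assms(1,3,4)])
  have "coop_integral k a' b' \<le> coop_integral k a b" if dom: "(a', b') \<in> norm_dom k" for a' b'
  proof -
    obtain \<tau> p where "(\<tau>, p) \<in> dom_D c G0 t" "coop_area c G0 t \<tau> p = coop_integral k a' b'"
      using coop_integral_attained[OF assms(1-3)] dom unfolding k_def by blast
    then show ?thesis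
      using assms(5) coop_area_eq_coop_integral[OF assms(1,3) ps]
      unfolding k_def a_def b_def by auto
  qed
  note crossings = maximizer_crossings_inside[OF k ab this]
  have "(\<tau>s, ps) \<in> closure (region_IV c G0 t)"
    using in_closure_region_IV_of_norm_bounds[OF assms(1-4)]
      crossings_inside_bounds[OF k ab crossings] crossings(1)
    unfolding k_def a_def b_def by blast
  then show ?thesis by blast
qed

end
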